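(* Let $N\ge1$ and let $\{a_n\}_{n=0}^{N-1},\{b_n\}_{n=0}^{N-1},\{c_n\}_{n=1}^{N}$ be real sequences with $c_n>0$, $a_{N-1}=0$, $b_{N-1}=\tfrac12$, $c_N=1$, satisfying for $n=1,\dots,N-1$ $$a_{n-1}=a_n\Big(\frac{1}{c_n^2+1}\Big)^{1/2}+b_n\Big(\frac{1}{c_n^2+1}\Big)^{3/2}c_n^2,\quad b_{n-1}=b_n\Big(\frac{1}{c_n^2+1}\Big)^{3/2}+\frac{c_n}{c_n^2+1},\quad -3b_nc_n+(c_n^2+1)^{1/2}(1-c_n^2)=0.$$ Then for each $n\in\{2,\dots,N\}$, $c_{n-1}$ is the unique root in $(0,1)$ of the equation in $x$ $$\frac{1}{x}(x^2+1)^{1/2}(1-x^2)=\frac{1}{c_n^2+1}\Big(\frac{1}{c_n}+2c_n\Big),$$ $c_N>c_{N-1}>\cdots>c_2>c_1$, and $b_n=\dfrac{(c_n^2+1)^{1/2}}{3c_n}(1-c_n^2)$ for $n=1,\dots,N-1$.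
   Context: These sequences describe the equilibrium of the risk-seeking insider model (Model 3) of an $N$-period Kyle-type insider trading model, in which the insider's trading intensity in period $n$ is $c_n\sigma_u\Delta t_N^{1/2}\Sigma_{n-1}^{-1/2}$; the claim concerns only the sequences as defined here. *)

theory Defs
  imports "HOL-Analysis.Analysis"
begin

end

theory Submission
  imports Defs
begin

text \<open>
  Let F x = (1/x) sqrt(x^2+1) (1 - x^2) and G c = (1/c + 2c)/(c^2+1). The third recursion says
  3 b(n) = F(c(n)); substituted into the recursion for b(n-1) it gives 3 b(n-1) = G(c(n)), and for
  n = N the boundary values give the same identity because G 1 = 3/2. Hence F(c(n-1)) = G(c(n)).
  Since F x = sqrt(1 + 1/x^2) (1 - x^2) is a product of two positive strictly decreasing functions
  on (0,1), such a root is unique, and G > 0 forces it into (0,1). Finally F < G on (0,1), so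
  F(c(n)) < G(c(n)) = F(c(n-1)), i.e. c(n-1) < c(n).
\<close>

definition F :: "real \<Rightarrow> real" where
  "F x = (1 / x) * (x ^ 2 + 1) powr (1/2) * (1 - x ^ 2)"

definition G :: "real \<Rightarrow> real" where
  "G c = (1 / (c ^ 2 + 1)) * (1 / c + 2 * c)"

lemma F_eq_sqrt: "F x = sqrt (x ^ 2 + 1) * (1 - x ^ 2) / x"
  unfolding F_def by (simp add: powr_half_sqrt add_nonneg_nonneg)

lemma F_eq_product:
  assumes "0 < x"
  shows "F x = sqrt (1 + 1 / x ^ 2) * (1 - x ^ 2)"
proof -
  have "F x = sqrt (x ^ 2 + 1) / x * (1 - x ^ 2)"
    unfolding F_eq_sqrt by simp
  also have "sqrt (x ^ 2 + 1) / x = sqrt ((x ^ 2 + 1) / x ^ 2)"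
    using assms by (simp add: real_sqrt_divide)
  also have "\<dots> = sqrt (1 + 1 / x ^ 2)"
    using assms by (simp add: add_divide_distrib)
  finally show ?thesis .
qed

lemma F_strict_decreasing:
  assumes "0 < x" "x < y" "y < 1"
  shows "F y < F x"
proof -
  have "sqrt (1 + 1 / y ^ 2) < sqrt (1 + 1 / x ^ 2)"
    using assms by (simp add: frac_less2 power_strict_mono)
  moreover have "0 < 1 - y ^ 2" "1 - y ^ 2 < 1 - x ^ 2"
    using assms by (auto simp: power_strict_mono abs_square_less_1)
  ultimately show ?thesis
    using assms unfolding F_eq_product[OF \<open>0 < x\<close>] F_eq_product[OF order.strict_trans[OF assms(1,2)]]
    by (intro mult_strict_mono) (auto simp: add_pos_nonneg)
qed

lemma F_inj_on: "inj_on F {0<..<1}"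
  by (rule inj_onI) (metis F_strict_decreasing greaterThanLessThan_iff less_irrefl linorder_neqE)

lemma less_one_if_F_pos:
  assumes "0 < x" "0 < F x"
  shows "x < 1"
proof -
  have "0 < sqrt (1 + 1 / x ^ 2)"
    by (simp add: add_pos_nonneg)
  then have "0 < 1 - x ^ 2"
    using assms unfolding F_eq_product[OF assms(1)] by (simp add: zero_less_mult_iff)
  then show ?thesis
    using assms(1) by (simp add: abs_square_less_1)
qed

lemma G_pos: "0 < c \<Longrightarrow> 0 < G c"
  unfolding G_def by (simp add: add_pos_pos)

lemma F_less_G:
  assumes "0 < c" "c < 1"
  shows "F c < G c"
proof -
  have c2: "0 < c ^ 2" "c ^ 2 < 1"
    using assms by (auto simp: abs_square_less_1)
  have "(c ^ 2 + 1) * (sqrt (c ^ 2 + 1) * (1 - c ^ 2)) = sqrt (c ^ 2 + 1) * (1 - c ^ 2 * c ^ 2)"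
    by (simp add: algebra_simps)
  also have "\<dots> < sqrt (c ^ 2 + 1)"
    using c2 by (simp add: add_pos_nonneg)
  also have "\<dots> \<le> c ^ 2 + 1"
    by (rule real_le_lsqrt) (simp_all add: self_le_power)
  also have "\<dots> < 1 + 2 * c ^ 2"
    using c2 by simp
  finally have "sqrt (c ^ 2 + 1) * (1 - c ^ 2) < (1 + 2 * c ^ 2) / (c ^ 2 + 1)"
    by (subst pos_less_divide_eq) (simp_all add: add_pos_nonneg ac_simps)
  then have "F c < (1 + 2 * c ^ 2) / (c ^ 2 + 1) / c"
    unfolding F_eq_sqrt using assms by (intro divide_strict_right_mono)
  also have "\<dots> = G c"
    unfolding G_def using assms by (simp add: field_simps power2_eq_square)
  finally show ?thesis .
qed

lemma less_if_F_eq_G: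
  assumes "0 < x" "0 < y" "y < 1" "F x = G y"
  shows "x < y"
proof (rule ccontr)
  assume "\<not> x < y"
  have "x < 1"
    using less_one_if_F_pos assms G_pos by simp
  then have "F x \<le> F y"
    using \<open>\<not> x < y\<close> assms F_strict_decreasing[of y x] by (cases "x = y") auto
  then show False
    using F_less_G[of y] assms by simp
qed

lemma powr_three_halves_inverse:
  assumes "0 < t"
  shows "(1 / t) powr (3/2) = 1 / (t * sqrt t)"
proof -
  have "(1 / t) powr (3/2) = (1 / t) powr (1 + 1/2)"
    by simp
  also have "\<dots> = (1 / t) powr 1 * (1 / t) powr (1/2)"
    by (rule powr_add)
  also have "\<dots> = 1 / (t * sqrt t)"
    using assms by (simp add: powr_half_sqrt real_sqrt_divide)
  finally show ?thesis .
qed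

lemma backward_step:
  assumes "0 < c" and "3 * b * c = sqrt (c ^ 2 + 1) * (1 - c ^ 2)"
  shows "3 * (b * (1 / (c ^ 2 + 1)) powr (3/2) + c / (c ^ 2 + 1)) = G c"
proof -
  define t where "t = c ^ 2 + 1"
  have t: "0 < t" "0 < sqrt t"
    unfolding t_def by (simp_all add: add_nonneg_pos)
  have "3 * b = sqrt t * (1 - c ^ 2) / c"
    using assms unfolding t_def by (simp add: eq_divide_eq)
  then have "3 * b * (1 / t) powr (3/2) = sqrt t * (1 - c ^ 2) / (c * (t * sqrt t))"
    unfolding powr_three_halves_inverse[OF t(1)] by simp
  also have "\<dots> = (1 - c ^ 2) / (c * t)"
    using t by simp
  finally have "3 * (b * (1 / t) powr (3/2) + c / t) = (1 - c ^ 2) / (c * t) + 3 * c / t"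
    by (simp add: algebra_simps)
  also have "\<dots> = G c"
    unfolding G_def t_def[symmetric] using assms(1) t by (simp add: field_simps power2_eq_square)
  finally show ?thesis
    unfolding t_def .
qed

locale backward_recursion =
  fixes N :: nat and b c :: "nat \<Rightarrow> real"
  assumes cpos: "\<And>n. 1 \<le> n \<Longrightarrow> n \<le> N \<Longrightarrow> c n > 0"
    and bN: "b (N - 1) = 1/2"
    and cN: "c N = 1"
    and recb: "\<And>n. 1 \<le> n \<Longrightarrow> n \<le> N - 1 \<Longrightarrow>
       b (n - 1) = b n * (1 / (c n ^ 2 + 1)) powr (3/2) + c n / (c n ^ 2 + 1)"
    and recc: "\<And>n. 1 \<le> n \<Longrightarrow> n \<le> N - 1 \<Longrightarrow>
       - 3 * b n * c n + (c n ^ 2 + 1) powr (1/2) * (1 - c n ^ 2) = 0"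
begin

lemma three_b_times_c:
  "1 \<le> n \<Longrightarrow> n \<le> N - 1 \<Longrightarrow> 3 * b n * c n = sqrt (c n ^ 2 + 1) * (1 - c n ^ 2)"
  using recc by (simp add: powr_half_sqrt add_nonneg_nonneg)

lemma b_eq:
  assumes "1 \<le> n" "n \<le> N - 1"
  shows "b n = (c n ^ 2 + 1) powr (1/2) / (3 * c n) * (1 - c n ^ 2)"
proof -
  have "0 < c n"
    using cpos assms by simp
  then show ?thesis
    using three_b_times_c[OF assms] by (simp add: powr_half_sqrt add_nonneg_nonneg eq_divide_eq)
qed

lemma F_prev_eq_G:
  assumes "2 \<le> n" "n \<le> N"
  shows "F (c (n - 1)) = G (c n)"
proof -
  have n1: "1 \<le> n - 1" "n - 1 \<le> N - 1"
    using assms by auto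
  have "F (c (n - 1)) = 3 * b (n - 1) * c (n - 1) / c (n - 1)"
    unfolding F_eq_sqrt three_b_times_c[OF n1] ..
  also have "\<dots> = 3 * b (n - 1)"
    using cpos[of "n - 1"] assms by force
  also have "\<dots> = G (c n)"
  proof (cases "n = N")
    case True
    then show ?thesis
      using bN cN by (simp add: G_def)
  next
    case False
    then have n: "1 \<le> n" "n \<le> N - 1"
      using assms by auto
    moreover have "0 < c n"
      using cpos assms by simp
    ultimately show ?thesis
      using recb[OF n] backward_step[OF _ three_b_times_c[OF n]] by simp
  qed
  finally show ?thesis .
qed

lemma c_prev_in_unit_interval:
  assumes "2 \<le> n" "n \<le> N"
  shows "0 < c (n - 1) \<and> c (n - 1) < 1"
proof -
  have "0 < c (n - 1)" "0 < c n"
    using assms cpos by auto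
  moreover from \<open>0 < c n\<close> have "0 < F (c (n - 1))"
    unfolding F_prev_eq_G[OF assms] by (rule G_pos)
  ultimately show ?thesis
    using less_one_if_F_pos by blast
qed

lemma c_prev_less:
  assumes "2 \<le> n" "n \<le> N"
  shows "c (n - 1) < c n"
proof (cases "n = N")
  case True
  then show ?thesis
    using cN c_prev_in_unit_interval[OF assms] by simp
next
  case False
  then have "0 < c n" "c n < 1"
    using c_prev_in_unit_interval[of "n + 1"] assms by simp_all
  then show ?thesis
    using less_if_F_eq_G[OF _ _ _ F_prev_eq_G[OF assms]] c_prev_in_unit_interval[OF assms] by blast
qed

lemma unique_root:
  assumes "2 \<le> n" "n \<le> N"
  shows "\<exists>!x. 0 < x \<and> x < 1 \<and> F x = G (c n)"
  using c_prev_in_unit_interval[OF assms] F_prev_eq_G[OF assms]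
  by (intro ex1I[of _ "c (n - 1)"]) (auto intro: inj_onD[OF F_inj_on])

end

theorem proposition5:
  fixes N :: nat and a b c :: "nat \<Rightarrow> real"
  assumes hN: "N \<ge> 1"
    and cpos: "\<And>n. 1 \<le> n \<Longrightarrow> n \<le> N \<Longrightarrow> c n > 0"
    and aN: "a (N - 1) = 0"
    and bN: "b (N - 1) = 1/2"
    and cN: "c N = 1"
    and reca: "\<And>n. 1 \<le> n \<Longrightarrow> n \<le> N - 1 \<Longrightarrow>
       a (n - 1) = a n * (1 / (c n ^ 2 + 1)) powr (1/2)
                   + b n * (1 / (c n ^ 2 + 1)) powr (3/2) * c n ^ 2"
    and recb: "\<And>n. 1 \<le> n \<Longrightarrow> n \<le> N - 1 \<Longrightarrow>
       b (n - 1) = b n * (1 / (c n ^ 2 + 1)) powr (3/2) + c n / (c n ^ 2 + 1)"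
    and recc: "\<And>n. 1 \<le> n \<Longrightarrow> n \<le> N - 1 \<Longrightarrow>
       - 3 * b n * c n + (c n ^ 2 + 1) powr (1/2) * (1 - c n ^ 2) = 0"
  shows "(\<forall>n. 2 \<le> n \<and> n \<le> N \<longrightarrow>
            (\<exists>!x. 0 < x \<and> x < 1 \<and>
               (1 / x) * (x ^ 2 + 1) powr (1/2) * (1 - x ^ 2)
                 = (1 / (c n ^ 2 + 1)) * (1 / c n + 2 * c n))
            \<and> 0 < c (n - 1) \<and> c (n - 1) < 1
            \<and> (1 / c (n - 1)) * (c (n - 1) ^ 2 + 1) powr (1/2) * (1 - c (n - 1) ^ 2)
                 = (1 / (c n ^ 2 + 1)) * (1 / c n + 2 * c n))
       \<and> (\<forall>n. 2 \<le> n \<and> n \<le> N \<longrightarrow> c (n - 1) < c n)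
       \<and> (\<forall>n. 1 \<le> n \<and> n \<le> N - 1 \<longrightarrow>
            b n = (c n ^ 2 + 1) powr (1/2) / (3 * c n) * (1 - c n ^ 2))"
proof -
  interpret backward_recursion N b c
    using cpos bN cN recb recc by unfold_locales
  show ?thesis
    unfolding F_def[symmetric] G_def[symmetric]
    using unique_root c_prev_in_unit_interval F_prev_eq_G c_prev_less b_eq by blast
qed

end
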